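(* Let $n\in\mathbb{N}$ and let $X$ be a random matrix drawn from the polynomial random matrix ensemble on $\mathrm{GL}(n,\mathbb{C})$ associated with weight functions $w_0,\dots,w_{n-1}\in L^{1,0}_{[1,n]}(\mathbb{R}_+)$. Then the spherical transform of $X$ is given by \[ \mathcal{S}_X(s)=C_{\rm sv}^{(n)}[w]\Big(\prod_{j=0}^{n} j!\Big)\frac{\det\big[\mathcal{M}w_{j-1}(s_k-(n-1)/2)\big]_{j,k=1,\dots,n}}{\Delta_n(s)} \] for all $s\in\mathbb{C}^n$ (with pairwise distinct components) for which the spherical transform and the Mellin transforms on the right-hand side are defined (in particular for $s\in\varrho'+\imath\mathbb{R}^n$).
   Context: Notation: $\Delta_n(x)=\prod_{1\le j<k\le n}(x_k-x_j)$ is the Vandermonde determinant. $\mathbb{R}_+=(0,\infty)$. The Mellin transform of $f\in L^1(\mathbb{R}_+)$ is $\mathcal{M}f(s)=\int_0^\infty f(x)x^{s-1}dx$. For an interval $\mathbb{I}\subset\mathbb{R}$ containing $1$ and $k\in\mathbb{N}_0$, $L^{1,k}_{\mathbb{I}}(\mathbb{R}_+)$ is the set of $f\in L^1(\mathbb{R}_+)$ that are $k$ times differentiable (i.e. $(k-1)$ times continuously differentiable with absolutely continuous $(k-1)$st derivative) such that $\int_0^\infty|y^{\kappa-1}(-y\,\partial_y)^jf(y)|dy<\infty$ for all $\kappa\in\mathbb{I}$ and $j=0,\dots,k$. Polynomial ensemble: given $w_0,\dots,w_{n-1}\in L^{1,0}_{[1,n]}(\mathbb{R}_+)$ such that the function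 $f_{\rm SV}(a)=C_{\rm sv}^{(n)}[w]\Delta_n(a)\det[w_{j-1}(a_k)]_{j,k=1,\dots,n}$ on $(0,\infty)^n$ is non-negative, where $C_{\rm sv}^{(n)}[w]=\big(n!\det[\int_0^\infty a^{k-1}w_{j-1}(a)da]_{j,k=1,\dots,n}\big)^{-1}$, the associated polynomial random matrix ensemble is the distribution of a random matrix $X\in\mathrm{GL}(n,\mathbb{C})$ having a density with respect to Lebesgue measure $dg=\prod_{j,k}dg_{jk}$ that is bi-unitarily invariant ($f_G(k_1gk_2)=f_G(g)$ for all unitary $k_1,k_2$), such that the (permutation-symmetric) joint density of the squared singular values of $X$ is $f_{\rm SV}$. Spherical transform: for a random matrix $X$ with bi-unitarily invariant Lebesgue density $f_G$ on $G=\mathrm{GL}(n,\mathbb{C})$, $\mathcal{S}_X(s)=\int_G f_G(g)\varphi_s(g)\,\frac{dg}{|\det g|^{2n}}$, where $\varphi_s(g)=\frac{\Delta_n(\varrho')}{\Delta_n(s)}\frac{\det[\lambda_j(g^*g)^{s_k+(n-1)/2}]_{j,k=1,\dots,n}}{\Delta_n(\lambda(g^*g))}$ for $s\in\mathbb{C}^n$, $\lambda(g^*g)=(\lambda_1(g^*g),\dots,\lambda_n(g^*g))$ are the eigenvalues of $g^*g$, and $\varrho'=(\varrho'_1,\dots,\varrho'_n)$ with $\varrho'_j=(2j+n-1)/2$. *)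

theory Defs
  imports "HOL-Analysis.Analysis" "Jordan_Normal_Form.Schur_Decomposition"
    "HOL-Computational_Algebra.Polynomial"
begin

text \<open>Conventions: indices are 0-based, so the paper's index j=1..n becomes j=0..n-1.
 An n x n complex matrix is a function on the index set {..<n} x {..<n}
 (extensional, as elements of the product measure space); Lebesgue measure on
 the space of such matrices is the product of Lebesgue measures on the entries.\<close>

definition Mat_idx :: "nat \<Rightarrow> (nat \<times> nat) set" where
  "Mat_idx n = {..<n} \<times> {..<n}"

definition lebesgue_mat :: "nat \<Rightarrow> (nat \<times> nat \<Rightarrow> complex) measure" where
  "lebesgue_mat n = PiM (Mat_idx n) (\<lambda>_. lborel)"

definition lebesgue_vec :: "nat \<Rightarrow> (nat \<Rightarrow> real) measure" where
  "lebesgue_vec n = PiM {..<n} (\<lambda>_. lborel)"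

definition to_mat :: "nat \<Rightarrow> (nat \<times> nat \<Rightarrow> complex) \<Rightarrow> complex mat" where
  "to_mat n g = mat n n (\<lambda>(i,j). g (i,j))"

definition of_mat :: "nat \<Rightarrow> complex mat \<Rightarrow> (nat \<times> nat \<Rightarrow> complex)" where
  "of_mat n A = restrict (\<lambda>(i,j). A $$ (i,j)) (Mat_idx n)"

definition unitary_mat :: "nat \<Rightarrow> complex mat \<Rightarrow> bool" where
  "unitary_mat n U \<longleftrightarrow> U \<in> carrier_mat n n \<and> mat_adjoint U * U = 1\<^sub>m n"

definition bi_unitarily_invariant :: "nat \<Rightarrow> ((nat \<times> nat \<Rightarrow> complex) \<Rightarrow> real) \<Rightarrow> bool" where
  "bi_unitarily_invariant n f \<longleftrightarrow>
     (\<forall>g \<in> space (lebesgue_mat n). \<forall>k1 k2. unitary_mat n k1 \<and> unitary_mat n k2 \<longrightarrow>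
        f (of_mat n (k1 * to_mat n g * k2)) = f g)"

definition vandermonde :: "nat \<Rightarrow> (nat \<Rightarrow> 'a::comm_ring_1) \<Rightarrow> 'a" where
  "vandermonde n x = (\<Prod>k<n. \<Prod>j<k. (x k - x j))"

text \<open>Eigenvalues of g^* g (real, listed in increasing order, with multiplicity):
  the squared singular values of g.\<close>
definition sq_sv :: "nat \<Rightarrow> (nat \<times> nat \<Rightarrow> complex) \<Rightarrow> (nat \<Rightarrow> real)" where
  "sq_sv n g = restrict (\<lambda>i. sorted_list_of_multiset
       (image_mset Re (proots (char_poly (mat_adjoint (to_mat n g) * to_mat n g)))) ! i) {..<n}"

definition mellin :: "(real \<Rightarrow> real) \<Rightarrow> complex \<Rightarrow> complex" where
  "mellin f s = set_lebesgue_integral lborel {0<..} (\<lambda>x. complex_of_real (f x) * complex_of_real x powr (s - 1))"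

definition mellin_defined :: "(real \<Rightarrow> real) \<Rightarrow> complex \<Rightarrow> bool" where
  "mellin_defined f s \<longleftrightarrow> set_integrable lborel {0<..} (\<lambda>x. complex_of_real (f x) * complex_of_real x powr (s - 1))"

definition L1k0 :: "real set \<Rightarrow> (real \<Rightarrow> real) \<Rightarrow> bool" where
  "L1k0 I f \<longleftrightarrow> set_integrable lborel {0<..} f \<and>
      (\<forall>\<kappa>\<in>I. set_integrable lborel {0<..} (\<lambda>y. y powr (\<kappa> - 1) * f y))"

definition C_sv :: "nat \<Rightarrow> (nat \<Rightarrow> real \<Rightarrow> real) \<Rightarrow> real" where
  "C_sv n w = 1 / (fact n * Determinant.det (mat n n (\<lambda>(j,k).
       set_lebesgue_integral lborel {0<..} (\<lambda>a. a ^ k * w j a))))"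

definition f_SV :: "nat \<Rightarrow> (nat \<Rightarrow> real \<Rightarrow> real) \<Rightarrow> (nat \<Rightarrow> real) \<Rightarrow> real" where
  "f_SV n w a = C_sv n w * vandermonde n a * Determinant.det (mat n n (\<lambda>(j,k). w j (a k)))"

definition pos_orthant :: "nat \<Rightarrow> (nat \<Rightarrow> real) set" where
  "pos_orthant n = {a \<in> space (lebesgue_vec n). \<forall>i<n. 0 < a i}"

definition perm_symmetric_set :: "nat \<Rightarrow> (nat \<Rightarrow> real) set \<Rightarrow> bool" where
  "perm_symmetric_set n B \<longleftrightarrow> (\<forall>p. p permutes {..<n} \<longrightarrow>
      (\<forall>a \<in> B. restrict (a \<circ> p) {..<n} \<in> B))"

text \<open>Polynomial ensemble: f_G is a bi-unitarily invariant Lebesgue probability density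
  on n x n complex matrices whose (permutation-symmetric) joint density of squared
  singular values is f_SV, i.e. P(sv(X) in B) = int_B f_SV for every symmetric Borel set B.\<close>
definition polynomial_ensemble ::
  "nat \<Rightarrow> (nat \<Rightarrow> real \<Rightarrow> real) \<Rightarrow> ((nat \<times> nat \<Rightarrow> complex) \<Rightarrow> real) \<Rightarrow> bool" where
  "polynomial_ensemble n w fG \<longleftrightarrow>
     fG \<in> borel_measurable (lebesgue_mat n) \<and>
     (\<forall>g \<in> space (lebesgue_mat n). 0 \<le> fG g) \<and>
     (\<integral>\<^sup>+ g. ennreal (fG g) \<partial>lebesgue_mat n) = 1 \<and>
     bi_unitarily_invariant n fG \<and>
     (\<forall>B \<in> sets (lebesgue_vec n). perm_symmetric_set n B \<longrightarrow>
        (\<integral>\<^sup>+ g. ennreal (fG g) * indicator B (sq_sv n g) \<partial>lebesgue_mat n) =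
        (\<integral>\<^sup>+ a. ennreal (f_SV n w a) * indicator (B \<inter> pos_orthant n) a \<partial>lebesgue_vec n))"

definition rho' :: "nat \<Rightarrow> nat \<Rightarrow> complex" where
  "rho' n j = of_real ((2 * (real j + 1) + real n - 1) / 2)"

definition spherical_fun :: "nat \<Rightarrow> (nat \<Rightarrow> complex) \<Rightarrow> (nat \<times> nat \<Rightarrow> complex) \<Rightarrow> complex" where
  "spherical_fun n s g =
     (let lam = sq_sv n g in
       vandermonde n (rho' n) / vandermonde n s *
       (Determinant.det (mat n n (\<lambda>(j,k). complex_of_real (lam j) powr (s k + (of_nat n - 1) / 2)))
        / complex_of_real (vandermonde n lam)))"

definition spherical_integrand ::
  "nat \<Rightarrow> ((nat \<times> nat \<Rightarrow> complex) \<Rightarrow> real) \<Rightarrow> (nat \<Rightarrow> complex) \<Rightarrow> (nat \<times> nat \<Rightarrow> complex) \<Rightarrow> complex" where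
  "spherical_integrand n fG s g =
     complex_of_real (fG g) * spherical_fun n s g / complex_of_real (cmod (Determinant.det (to_mat n g)) ^ (2 * n))"

definition spherical_transform ::
  "nat \<Rightarrow> ((nat \<times> nat \<Rightarrow> complex) \<Rightarrow> real) \<Rightarrow> (nat \<Rightarrow> complex) \<Rightarrow> complex" where
  "spherical_transform n fG s = (\<integral> g. spherical_integrand n fG s g \<partial>lebesgue_mat n)"

end

theory Submission
  imports Defs
begin

text \<open>For a matrix \<open>g\<close> with squared singular values \<open>a\<close>, \<open>|det g|\<^sup>2 = \<Prod>a\<close>, so the
  spherical integrand is \<open>f\<^sub>G(g)\<close> times a symmetric function of \<open>a\<close>. The level sets of a
  symmetric function are symmetric sets, so the defining property of the ensemble turns, via
  the layer-cake formula, the integral over matrices into an integral of that function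
  against \<open>f\<^sub>S\<^sub>V\<close> over the positive orthant. There the Vandermonde factor of \<open>f\<^sub>S\<^sub>V\<close> cancels the
  one of the spherical function, \<open>(\<Prod>a)\<^sup>-\<^sup>n\<close> is absorbed into the powers, and the integrand becomes
  \<open>det[w\<^sub>j(a\<^sub>i)] det[a\<^sub>i^(s\<^sub>j-(n-1)/2-1)]\<close>. Andr\'eief's identity integrates this to \<open>n!\<close> times
  the determinant of Mellin transforms, and \<open>\<Delta>\<^sub>n(\<rho>') = \<Prod>\<^sub>j\<^sub><\<^sub>n j!\<close>.\<close>

section \<open>Determinants\<close>

lemma det_mat_eq_sum_permutations:
  "det (mat n n (\<lambda>(i,j). f i j)) =
     (\<Sum>p\<in>{p. p permutes {0..<n}}. of_int (sign p) * (\<Prod>i<n. f i (p i)))"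
  by (subst det_def'[of _ n])
     (auto simp: atLeast0LessThan intro!: sum.cong prod.cong dest: permutes_in_image)

lemma det_mat_scale_rows:
  fixes d :: "nat \<Rightarrow> 'a::comm_ring_1"
  shows "det (mat n n (\<lambda>(i,j). d i * f i j)) = (\<Prod>i<n. d i) * det (mat n n (\<lambda>(i,j). f i j))"
  unfolding det_mat_eq_sum_permutations
  by (simp add: sum_distrib_left prod.distrib ac_simps)

lemma det_mat_swap_indices:
  "det (mat n n (\<lambda>(i,j). f j i)) = det (mat n n (\<lambda>(i,j). (f i j :: 'a::comm_ring_1)))"
proof -
  have "mat n n (\<lambda>(i,j). f j i) = transpose_mat (mat n n (\<lambda>(i,j). f i j))"
    by (intro eq_matI) auto
  thus ?thesis using det_transpose[of "mat n n (\<lambda>(i,j). f i j)" n] by simp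
qed

lemma of_real_det_mat:
  "of_real (det (mat n n (\<lambda>(i,j). f i j))) = det (mat n n (\<lambda>(i,j). of_real (f i j) :: 'a::real_field))"
  unfolding det_mat_eq_sum_permutations by (simp add: of_real_sum of_real_prod)

lemma measurable_det_mat[measurable]:
  fixes f :: "nat \<Rightarrow> nat \<Rightarrow> 'b \<Rightarrow> 'a::{second_countable_topology, real_normed_field}"
  assumes [measurable]: "\<And>i j. f i j \<in> borel_measurable N"
  shows "(\<lambda>x. det (mat n n (\<lambda>(i,j). f i j x))) \<in> borel_measurable N"
  unfolding det_mat_eq_sum_permutations by measurable

lemma det_mat_adjoint:
  assumes G: "G \<in> carrier_mat n n"
  shows "det (mat_adjoint G) = cnj (det G)"
proof -
  let ?Gc = "mat n n (\<lambda>(i,j). cnj (G $$ (i,j)))"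
  have "mat_adjoint G = transpose_mat ?Gc"
    using G by (intro eq_matI) (auto simp: mat_adjoint_def mat_of_rows_def conjugate_vec_def)
  hence "det (mat_adjoint G) = det ?Gc"
    using det_transpose[of ?Gc n] by simp
  also have "\<dots> = cnj (det G)"
    unfolding det_mat_eq_sum_permutations det_def'[OF G]
    by (auto simp: cnj_sum cnj_prod sign_def atLeast0LessThan G intro!: sum.cong prod.cong
             dest: permutes_in_image)
  finally show ?thesis .
qed

lemma sum_permutations_pair_eq_fact_det:
  fixes m :: "nat \<Rightarrow> nat \<Rightarrow> 'a::comm_ring_1"
  shows "(\<Sum>p\<in>{p. p permutes {0..<n}}. \<Sum>q\<in>{p. p permutes {0..<n}}.
            of_int (sign p * sign q) * (\<Prod>i<n. m (p i) (q i)))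
        = of_nat (fact n) * det (mat n n (\<lambda>(j,k). m j k))"
proof -
  let ?P = "{p. p permutes {0..<n}}"
  let ?D = "\<Sum>r\<in>?P. of_int (sign r) * (\<Prod>j<n. m j (r j))"
  have inner: "(\<Sum>q\<in>?P. of_int (sign p * sign q) * (\<Prod>i<n. m (p i) (q i))) = ?D"
    if p: "p \<in> ?P" for p
  proof -
    have p': "p permutes {..<n}" using p by (simp add: atLeast0LessThan)
    \<comment> \<open>Substituting \<open>q = r \<circ> p\<close> turns the inner sum into \<open>det m\<close>, whatever \<open>p\<close> is.\<close>
    have bij: "bij_betw (\<lambda>r. r \<circ> p) ?P ?P"
    proof (rule bij_betwI[where g = "\<lambda>q. q \<circ> Hilbert_Choice.inv p"])
      show "(\<lambda>r. r \<circ> p) \<in> ?P \<rightarrow> ?P" "(\<lambda>q. q \<circ> Hilbert_Choice.inv p) \<in> ?P \<rightarrow> ?P"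
        using p by (auto intro: permutes_compose permutes_inv)
      show "r \<circ> p \<circ> Hilbert_Choice.inv p = r" "q \<circ> Hilbert_Choice.inv p \<circ> p = q" for r q
        using p by (simp_all add: o_assoc[symmetric] permutes_inv_o)
    qed
    have "(\<Sum>q\<in>?P. of_int (sign p * sign q) * (\<Prod>i<n. m (p i) (q i)))
        = (\<Sum>r\<in>?P. of_int (sign p * sign (r \<circ> p)) * (\<Prod>i<n. m (p i) ((r \<circ> p) i)))"
      by (rule sum.reindex_bij_betw[OF bij, symmetric])
    also have "\<dots> = ?D"
    proof (rule sum.cong[OF refl])
      fix r assume r: "r \<in> ?P"
      have "sign (r \<circ> p) = sign r * sign p"
        using r p by (intro sign_compose) (auto simp: permutation_permutes)
      hence "sign p * sign (r \<circ> p) = sign r"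
        by (simp add: mult.left_commute)
      moreover have "(\<Prod>i<n. m (p i) ((r \<circ> p) i)) = (\<Prod>j<n. m j (r j))"
        using prod.permute[OF p', of "\<lambda>j. m j (r j)"] by (simp add: o_def)
      ultimately show "of_int (sign p * sign (r \<circ> p)) * (\<Prod>i<n. m (p i) ((r \<circ> p) i)) =
          of_int (sign r) * (\<Prod>j<n. m j (r j))" by simp
    qed
    finally show ?thesis .
  qed
  have "card ?P = fact n" by (rule card_permutations) auto
  thus ?thesis
    using inner by (simp add: det_mat_eq_sum_permutations)
qed

section \<open>Vandermonde determinants\<close>

lemma vandermonde_eq_det: "vandermonde n x = det (mat n n (\<lambda>(i,j). x i ^ j))"
proof (induction n)
  case 0
  then show ?case by (simp add: vandermonde_def)
next
  case (Suc n)
  define c where "c = x n"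
  define V where "V = mat (Suc n) (Suc n) (\<lambda>(i,j). x i ^ j)"
  define U where "U = mat (Suc n) (Suc n) (\<lambda>(i,j). if i = j then 1 else if Suc i = j then -c else 0)"
  define B where "B = mat (Suc n) (Suc n) (\<lambda>(i,j). if j = 0 then 1 else x i ^ (j-1) * (x i - c))"
  \<comment> \<open>Subtracting \<open>c\<close> times each column from the next one clears the last row but for a \<open>1\<close>.\<close>
  have VU: "V * U = B"
  proof (rule eq_matI)
    fix i j assume i: "i < dim_row B" and j: "j < dim_col B"
    have "(V * U) $$ (i,j) = (\<Sum>k<Suc n. x i ^ k * (if k = j then 1 else if Suc k = j then -c else 0))"
      using i j by (simp add: V_def U_def B_def scalar_prod_def atLeast0LessThan)
    also have "\<dots> = (\<Sum>k<Suc n. (if k = j then x i ^ k else 0) + (if Suc k = j then - c * x i ^ k else 0))"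
      by (intro sum.cong refl) auto
    also have "\<dots> = B $$ (i,j)"
    proof (cases j)
      case 0 then show ?thesis using i j by (simp add: sum.distrib B_def)
    next
      case (Suc j')
      have "(\<Sum>k<Suc n. (if Suc k = j then - c * x i ^ k else 0)) = - c * x i ^ j'"
        using j Suc by (simp add: B_def sum.delta')
      then show ?thesis using i j Suc by (cases "Suc j' = n") (auto simp: sum.distrib B_def algebra_simps)
    qed
    finally show "(V * U) $$ (i,j) = B $$ (i,j)" .
  qed (auto simp: V_def B_def U_def)
  have "det U = 1"
    by (subst det_upper_triangular[of _ "Suc n"])
       (auto simp: U_def upper_triangular_def diag_mat_def prod_list_zero_iff intro!: prod_list_neutral)
  hence "det V = det B"
    using det_mult[of V "Suc n" U] VU by (simp add: V_def U_def)
  also have "det B = (\<Sum>j<Suc n. B $$ (n,j) * cofactor B n j)"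
    by (rule laplace_expansion_row) (auto simp: B_def)
  also have "\<dots> = cofactor B n 0"
    by (subst sum.lessThan_Suc_shift) (simp add: B_def c_def)
  also have "mat_delete B n 0 = mat n n (\<lambda>(i,j). (x i - c) * x i ^ j)"
    by (rule eq_matI) (auto simp: mat_delete_def B_def)
  hence "cofactor B n 0 = (-1)^n * ((\<Prod>i<n. x i - c) * vandermonde n x)"
    unfolding cofactor_def by (simp add: det_mat_scale_rows Suc.IH)
  also have "(\<Prod>i<n. x i - c) = (\<Prod>i<n. (-1) * (x n - x i))"
    unfolding c_def by (intro prod.cong) auto
  also have "\<dots> = (-1)^n * (\<Prod>i<n. x n - x i)"
    by (simp only: prod.distrib prod_constant card_lessThan)
  finally show ?case by (simp add: V_def vandermonde_def algebra_simps)
qed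

lemma vandermonde_cong: "(\<And>i. i < n \<Longrightarrow> x i = y i) \<Longrightarrow> vandermonde n x = vandermonde n y"
  unfolding vandermonde_def by (intro prod.cong refl) auto

lemma vandermonde_permute:
  assumes p: "p permutes {..<n}"
  shows "vandermonde n (\<lambda>i. x (p i)) = of_int (sign p) * vandermonde n x"
proof -
  define A where "A = mat n n (\<lambda>(i,j). x i ^ j)"
  have "mat n n (\<lambda>(i,j). x (p i) ^ j) = mat n n (\<lambda>(i,j). A $$ (p i, j))"
    using permutes_in_image[OF p] by (intro eq_matI) (auto simp: A_def)
  thus ?thesis
    using det_permute_rows[of A n p] p unfolding vandermonde_eq_det A_def by (simp add: atLeast0LessThan)
qed

lemma vandermonde_eq_0_imp_eq:
  assumes "vandermonde n x = 0"
  shows "\<exists>j k. j < k \<and> k < n \<and> x j = (x k :: 'a::idom)"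
  using assms unfolding vandermonde_def by (auto simp: prod_zero_iff) metis

lemma vandermonde_rho': "vandermonde n (rho' n) = of_nat (\<Prod>k<n. fact k)"
proof -
  have "vandermonde n (rho' n) = (\<Prod>k<n. \<Prod>j<k. (of_nat (k - j) :: complex))"
    unfolding vandermonde_def rho'_def
    by (intro prod.cong refl) (auto simp: of_nat_diff field_simps)
  also have "\<dots> = (\<Prod>k<n. of_nat (fact k))"
  proof (intro prod.cong refl)
    fix k
    have "(\<Prod>j<k. (of_nat (k - j) :: complex)) = of_nat (\<Prod>j=0..<k. k - j)"
      by (simp add: atLeast0LessThan)
    also have "\<dots> = of_nat (fact k)" using fact_prod_rev[where 'a=nat, of k] by simp
    finally show "(\<Prod>j<k. (of_nat (k - j) :: complex)) = of_nat (fact k)" .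
  qed
  finally show ?thesis by simp
qed

section \<open>Squared singular values\<close>

lemma to_mat_carrier: "to_mat n g \<in> carrier_mat n n"
  by (simp add: to_mat_def)

lemma mat_adjoint_carrier: "G \<in> carrier_mat n n \<Longrightarrow> mat_adjoint G \<in> carrier_mat n n"
  by (auto simp: mat_adjoint_def)

text \<open>With \<open>w = G v\<close>, the number \<open>v\<^sup>* (G\<^sup>* G) v = |w|\<^sup>2\<close> is real, and it equals \<open>a |v|\<^sup>2\<close>.\<close>

lemma eigenvalue_adjoint_mult_self_real:
  fixes G :: "complex mat"
  assumes G: "G \<in> carrier_mat n n" and ev: "eigenvector (mat_adjoint G * G) v a"
  shows "Im a = 0"
proof -
  let ?A = "mat_adjoint G * G"
  have v: "v \<in> carrier_vec n" and "v \<noteq> 0\<^sub>v n" and Av: "?A *\<^sub>v v = a \<cdot>\<^sub>v v"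
    using ev G unfolding eigenvector_def by (auto simp: mat_adjoint_def)
  then obtain i where i: "i < n" "v $ i \<noteq> 0"
    by (metis vec_eq_iff index_zero_vec carrier_vecD)
  have Avi: "(?A *\<^sub>v v) $ i = (\<Sum>k<n. (\<Sum>l<n. cnj (G $$ (l,i)) * G $$ (l,k)) * v $ k)" if "i < n" for i
    using that G v by (auto simp: scalar_prod_def atLeast0LessThan mat_adjoint_def conjugate_vec_def
                           intro!: sum.cong)
  define w where "w l = (\<Sum>k<n. G $$ (l,k) * v $ k)" for l
  define S where "S = (\<Sum>i<n. cnj (v $ i) * (?A *\<^sub>v v) $ i)"
  have "S = (\<Sum>i<n. \<Sum>k<n. \<Sum>l<n. cnj (v $ i) * cnj (G $$ (l,i)) * (G $$ (l,k) * v $ k))"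
    unfolding S_def by (intro sum.cong refl) (simp add: Avi sum_distrib_left sum_distrib_right mult_ac)
  also have "\<dots> = (\<Sum>i<n. \<Sum>l<n. \<Sum>k<n. cnj (v $ i) * cnj (G $$ (l,i)) * (G $$ (l,k) * v $ k))"
    by (intro sum.cong refl sum.swap)
  also have "\<dots> = (\<Sum>l<n. \<Sum>i<n. \<Sum>k<n. cnj (v $ i) * cnj (G $$ (l,i)) * (G $$ (l,k) * v $ k))"
    by (rule sum.swap)
  also have "\<dots> = (\<Sum>l<n. cnj (w l) * w l)"
    unfolding w_def by (simp add: sum_product cnj_sum mult_ac, rule sum.cong[OF refl], rule sum.swap)
  finally have "Im S = 0" by (simp add: Im_sum)
  have "S = a * of_real (\<Sum>i<n. (cmod (v $ i))^2)"
    unfolding S_def of_real_sum using v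
    by (simp add: Av sum_distrib_left mult_ac complex_norm_square del: of_real_power)
  moreover have "(\<Sum>i<n. (cmod (v $ i))^2) > 0"
    using i by (intro sum_pos2[of _ i]) auto
  ultimately show ?thesis using \<open>Im S = 0\<close> by simp
qed

lemma det_eq_prod_list_of_char_poly:
  fixes A :: "'a::field mat"
  assumes A: "A \<in> carrier_mat n n"
    and cp: "char_poly A = (\<Prod>a\<leftarrow>as. [:- a, 1:])" and len: "length as = n"
  shows "det A = prod_list as"
proof -
  have "char_matrix A 0 = A" using A by (intro eq_matI) (auto simp: char_matrix_def)
  hence "poly (char_poly A) 0 = det (- A)" using char_poly_matrix[OF A, of 0] by simp
  also have "- A = (-1) \<cdot>\<^sub>m A" using A by (intro eq_matI) auto
  finally have "(-1)^n * det A = poly (char_poly A) 0" using A by simp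
  also have "\<dots> = (-1)^n * prod_list as"
    unfolding cp poly_prod_list using len by (induction as arbitrary: n) auto
  finally show ?thesis by simp
qed

lemma proots_prod_list_linear: "proots (\<Prod>a\<leftarrow>as. [:- a, 1:]) = mset (as :: 'a::idom list)"
proof (induction as)
  case (Cons a as)
  have "(\<Prod>a\<leftarrow>as. [:- a, 1:]) \<noteq> 0"
    by (auto simp: prod_list_zero_iff)
  hence "proots ([:- a, 1:] * (\<Prod>a\<leftarrow>as. [:- a, 1:])) = proots [:- a, 1:] + mset as"
    using Cons by (subst proots_mult) auto
  then show ?case by simp
qed simp

lemma prod_sq_sv_eq_cmod_det: "(\<Prod>i<n. sq_sv n g i) = (cmod (det (to_mat n g)))\<^sup>2"
proof -
  define G where "G = to_mat n g"
  define A where "A = mat_adjoint G * G"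
  have G: "G \<in> carrier_mat n n" unfolding G_def by (rule to_mat_carrier)
  have A: "A \<in> carrier_mat n n" unfolding A_def using G mat_adjoint_carrier[OF G] by auto
  obtain as where cp: "char_poly A = (\<Prod>a\<leftarrow>as. [:- a, 1:])" and len: "length as = n"
    using char_poly_factorized[OF A] by blast
  have real: "Im a = 0" if "a \<in> set as" for a
  proof -
    have "poly (char_poly A) a = 0"
      using that unfolding cp poly_prod_list by (auto simp: prod_list_zero_iff)
    then obtain v where "eigenvector A v a"
      using eigenvalue_root_char_poly[OF A] unfolding eigenvalue_def by blast
    thus ?thesis using eigenvalue_adjoint_mult_self_real[OF G] unfolding A_def by blast
  qed
  have "sorted_list_of_multiset (image_mset Re (proots (char_poly A))) = sort (map Re as)"
    by (simp add: cp proots_prod_list_linear flip: mset_map)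
  hence "complex_of_real (\<Prod>i<n. sq_sv n g i) = of_real (prod_list (sort (map Re as)))"
    using len by (simp add: sq_sv_def flip: G_def A_def) (simp add: prod.list_conv_set_nth atLeast0LessThan)
  also have "\<dots> = prod_list as"
    using real by (simp add: prod_mset_prod_list[symmetric]) (induction as; auto simp: complex_eq_iff)
  also have "\<dots> = det A"
    by (rule det_eq_prod_list_of_char_poly[OF A cp len, symmetric])
  also have "\<dots> = cnj (det G) * det G"
    unfolding A_def det_mult[OF mat_adjoint_carrier[OF G] G] det_mat_adjoint[OF G] ..
  also have "\<dots> = of_real ((cmod (det G))\<^sup>2)"
    by (simp add: complex_norm_square mult.commute del: of_real_power)
  finally show ?thesis unfolding G_def of_real_eq_iff .
qed

section \<open>Andr\'eief's identity\<close>

interpretation lborel_product: product_sigma_finite "\<lambda>_::nat. (lborel :: real measure)"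
  by unfold_locales

lemma space_lebesgue_vec: "space (lebesgue_vec n) = (\<Pi>\<^sub>E i\<in>{..<n}. UNIV)"
  by (simp add: lebesgue_vec_def space_PiM)

lemma sigma_finite_lebesgue_vec: "sigma_finite_measure (lebesgue_vec n)"
  unfolding lebesgue_vec_def by (rule lborel_product.sigma_finite) simp

lemma measurable_lebesgue_vec_component[measurable]:
  "(\<lambda>a. a k) \<in> borel_measurable (lebesgue_vec n)"
proof (cases "k < n")
  case True
  then show ?thesis
    using measurable_component_singleton[of k "{..<n}" "\<lambda>_. lborel"] by (simp add: lebesgue_vec_def)
next
  case False
  have "(\<lambda>a::nat \<Rightarrow> real. undefined :: real) \<in> borel_measurable (lebesgue_vec n)"
    by simp
  then show ?thesis
    by (rule measurable_cong[THEN iffD1, rotated])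
       (use False in \<open>auto simp: space_lebesgue_vec PiE_def extensional_def\<close>)
qed

lemma pos_orthant_sets[measurable]: "pos_orthant n \<in> sets (lebesgue_vec n)"
  unfolding pos_orthant_def by measurable

lemma indicator_pos_orthant:
  assumes "a \<in> space (lebesgue_vec n)"
  shows "indicator (pos_orthant n) a = (\<Prod>i<n. indicator {0<..} (a i) :: real)"
  using assms by (auto simp: pos_orthant_def indicator_def prod_zero_iff)

lemma andreief_identity:
  fixes u v :: "nat \<Rightarrow> real \<Rightarrow> complex"
  assumes int: "\<And>j k. j < n \<Longrightarrow> k < n \<Longrightarrow> set_integrable lborel {0<..} (\<lambda>x. u j x * v k x)"
  defines "F \<equiv> \<lambda>a. indicator (pos_orthant n) a *\<^sub>R
                    (det (mat n n (\<lambda>(i,j). u j (a i))) * det (mat n n (\<lambda>(i,j). v j (a i))))"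
  shows "integrable (lebesgue_vec n) F"
    and "integral\<^sup>L (lebesgue_vec n) F =
           of_nat (fact n) * det (mat n n (\<lambda>(j,k). set_lebesgue_integral lborel {0<..} (\<lambda>x. u j x * v k x)))"
proof -
  let ?P = "{p. p permutes {0..<n}}"
  define G where "G p q i x = indicator {0<..} x *\<^sub>R (u (p i) x * v (q i) x)" for p q :: "nat \<Rightarrow> nat" and i x
  define H where "H a = (\<Sum>p\<in>?P. \<Sum>q\<in>?P. of_int (sign p * sign q) * (\<Prod>i<n. G p q i (a i)))" for a
  have FH: "F a = H a" if "a \<in> space (lebesgue_vec n)" for a
    unfolding F_def H_def G_def indicator_pos_orthant[OF that] det_mat_eq_sum_permutations
      sum_product scaleR_sum_right
    by (intro sum.cong refl) (simp add: prod.distrib scaleR_conv_of_real of_real_prod mult_ac)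
  have intG: "integrable lborel (G p q i)" if "p \<in> ?P" "q \<in> ?P" "i < n" for p q i
    using int[of "p i" "q i"] permutes_in_image[of p] permutes_in_image[of q] that
    unfolding G_def set_integrable_def by auto
  have int_prod: "integrable (lebesgue_vec n) (\<lambda>a. \<Prod>i<n. G p q i (a i))"
    and integral_prod: "(\<integral>a. (\<Prod>i<n. G p q i (a i)) \<partial>lebesgue_vec n) =
                          (\<Prod>i<n. set_lebesgue_integral lborel {0<..} (\<lambda>x. u (p i) x * v (q i) x))"
    if "p \<in> ?P" "q \<in> ?P" for p q
    using lborel_product.product_integrable_prod[of "{..<n}" "G p q"]
      lborel_product.product_integral_prod[of "{..<n}" "G p q"] intG that
    by (auto simp: lebesgue_vec_def set_lebesgue_integral_def G_def[abs_def])
  have intH: "integrable (lebesgue_vec n) H"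
    unfolding H_def using int_prod by (intro Bochner_Integration.integrable_sum integrable_mult_right) auto
  have "integral\<^sup>L (lebesgue_vec n) H = (\<Sum>p\<in>?P. \<Sum>q\<in>?P. of_int (sign p * sign q) *
        (\<integral>a. (\<Prod>i<n. G p q i (a i)) \<partial>lebesgue_vec n))"
    unfolding H_def using int_prod
    by (subst Bochner_Integration.integral_sum)
       (auto intro!: Bochner_Integration.integrable_sum integrable_mult_right sum.cong
             simp: Bochner_Integration.integral_sum)
  also have "\<dots> = (\<Sum>p\<in>?P. \<Sum>q\<in>?P. of_int (sign p * sign q) *
        (\<Prod>i<n. set_lebesgue_integral lborel {0<..} (\<lambda>x. u (p i) x * v (q i) x)))"
    using integral_prod by (intro sum.cong refl) auto
  finally show "integrable (lebesgue_vec n) F"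
    and "integral\<^sup>L (lebesgue_vec n) F = of_nat (fact n) *
           det (mat n n (\<lambda>(j,k). set_lebesgue_integral lborel {0<..} (\<lambda>x. u j x * v k x)))"
    using intH FH sum_permutations_pair_eq_fact_det[of "\<lambda>j k. set_lebesgue_integral lborel {0<..} (\<lambda>x. u j x * v k x)" n]
    by (auto cong: Bochner_Integration.integrable_cong Bochner_Integration.integral_cong)
qed

section \<open>Integrals of functions with symmetric level sets\<close>

text \<open>Layer cake: \<open>H = \<integral>\<^sub>0\<^sup>\<infinity> 1{t < H} dt\<close> and Tonelli reduce the claim to the level sets of \<open>H\<close>,
  where it is the hypothesis \<open>hyp\<close>. The map \<open>S\<close> need not be measurable: \<open>1{t < H \<circ> S}\<close> is only
  integrated against \<open>f\<^sub>G\<close>, and there it equals \<open>1{t f\<^sub>G < f\<^sub>G (H \<circ> S)}\<close>, which is measurable.\<close>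

lemma nn_integral_transfer_levels:
  fixes M :: "'a measure" and N :: "'b measure" and fG :: "'a \<Rightarrow> real" and S :: "'a \<Rightarrow> 'b"
    and H :: "'b \<Rightarrow> real" and \<rho> :: "'b \<Rightarrow> ennreal" and Sym :: "'b set \<Rightarrow> bool"
  assumes "sigma_finite_measure M" and "sigma_finite_measure N"
    and fG[measurable]: "fG \<in> borel_measurable M" and fG0: "\<And>g. g \<in> space M \<Longrightarrow> 0 \<le> fG g"
    and S: "\<And>g. g \<in> space M \<Longrightarrow> S g \<in> space N"
    and H[measurable]: "H \<in> borel_measurable N" and H0: "\<And>a. a \<in> space N \<Longrightarrow> 0 \<le> H a"
    and HS[measurable]: "(\<lambda>g. fG g * H (S g)) \<in> borel_measurable M"
    and \<rho>[measurable]: "\<rho> \<in> borel_measurable N"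
    and symH: "\<And>t. Sym {a \<in> space N. t < H a}"
    and hyp: "\<And>B. B \<in> sets N \<Longrightarrow> Sym B \<Longrightarrow>
        (\<integral>\<^sup>+g. ennreal (fG g) * indicator B (S g) \<partial>M) = (\<integral>\<^sup>+a. \<rho> a * indicator B a \<partial>N)"
  shows "(\<integral>\<^sup>+g. ennreal (fG g * H (S g)) \<partial>M) = (\<integral>\<^sup>+a. \<rho> a * ennreal (H a) \<partial>N)"
proof -
  interpret M: sigma_finite_measure M by fact
  interpret N: sigma_finite_measure N by fact
  interpret PM: pair_sigma_finite M lborel ..
  interpret PN: pair_sigma_finite N lborel ..
  define B where "B t = {a \<in> space N. t < H a}" for t
  have B[measurable]: "B t \<in> sets N" for t unfolding B_def by measurable
  define K where "K g t = ennreal (fG g) * indicator {0..} t * (if t * fG g < fG g * H (S g) then 1 else 0)"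
    for g t
  have K_eq: "K g t = ennreal (fG g) * indicator {0..} t * indicator (B t) (S g)" if g: "g \<in> space M" for g t
  proof (cases "fG g = 0")
    case False
    hence "(t * fG g < fG g * H (S g)) = (t < H (S g))" using fG0[OF g] by (simp add: mult.commute)
    thus ?thesis using S[OF g] by (simp add: K_def B_def indicator_def)
  qed (simp add: K_def)
  have layer_cake: "(\<integral>\<^sup>+t. c * indicator {0..} t * indicator (B t) a \<partial>lborel) = c * ennreal (H a)"
    if a: "a \<in> space N" for a c
  proof -
    have "(\<integral>\<^sup>+t. c * indicator {0..} t * indicator (B t) a \<partial>lborel) =
          (\<integral>\<^sup>+t. c * indicator {0..<H a} t \<partial>lborel)"
      using a by (intro nn_integral_cong) (auto simp: B_def indicator_def)
    also have "\<dots> = c * ennreal (H a)" using H0[OF a] by (subst nn_integral_cmult) auto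
    finally show ?thesis .
  qed
  have "(\<integral>\<^sup>+g. ennreal (fG g * H (S g)) \<partial>M) = (\<integral>\<^sup>+g. \<integral>\<^sup>+t. K g t \<partial>lborel \<partial>M)"
    using fG0 H0 S by (intro nn_integral_cong) (simp add: K_eq layer_cake ennreal_mult)
  also have "\<dots> = (\<integral>\<^sup>+t. \<integral>\<^sup>+g. K g t \<partial>M \<partial>lborel)"
    by (rule PM.Fubini'[symmetric]) (unfold K_def, measurable)
  also have "\<dots> = (\<integral>\<^sup>+t. \<integral>\<^sup>+a. \<rho> a * indicator {0..} t * indicator (B t) a \<partial>N \<partial>lborel)"
  proof (rule nn_integral_cong)
    fix t :: real
    have "(\<integral>\<^sup>+g. K g t \<partial>M) = (\<integral>\<^sup>+g. ennreal (fG g) * indicator {0..} t * indicator (B t) (S g) \<partial>M)"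
      by (intro nn_integral_cong) (simp add: K_eq)
    also have "\<dots> = (\<integral>\<^sup>+a. \<rho> a * indicator {0..} t * indicator (B t) a \<partial>N)"
      using hyp[OF B symH[of t, folded B_def]] by (cases "0 \<le> t") simp_all
    finally show "(\<integral>\<^sup>+g. K g t \<partial>M) = \<dots>" .
  qed
  also have "\<dots> = (\<integral>\<^sup>+a. \<integral>\<^sup>+t. \<rho> a * indicator {0..} t * indicator (B t) a \<partial>lborel \<partial>N)"
    by (rule PN.Fubini') (unfold B_def, measurable)
  also have "\<dots> = (\<integral>\<^sup>+a. \<rho> a * ennreal (H a) \<partial>N)"
    by (intro nn_integral_cong layer_cake)
  finally show ?thesis .
qed

lemma integral_transfer_levels_nonneg:
  fixes M :: "'a measure" and N :: "'b measure" and fG :: "'a \<Rightarrow> real" and S :: "'a \<Rightarrow> 'b"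
    and H :: "'b \<Rightarrow> real" and r :: "'b \<Rightarrow> real" and Sym :: "'b set \<Rightarrow> bool"
  assumes sfM: "sigma_finite_measure M" and sfN: "sigma_finite_measure N"
    and fG[measurable]: "fG \<in> borel_measurable M" and fG0: "\<And>g. g \<in> space M \<Longrightarrow> 0 \<le> fG g"
    and S: "\<And>g. g \<in> space M \<Longrightarrow> S g \<in> space N"
    and H[measurable]: "H \<in> borel_measurable N" and H0: "\<And>a. a \<in> space N \<Longrightarrow> 0 \<le> H a"
    and intM: "integrable M (\<lambda>g. fG g * H (S g))"
    and r[measurable]: "r \<in> borel_measurable N" and r0: "\<And>a. a \<in> space N \<Longrightarrow> 0 \<le> r a"
    and symH: "\<And>t. Sym {a \<in> space N. t < H a}"
    and hyp: "\<And>B. B \<in> sets N \<Longrightarrow> Sym B \<Longrightarrow>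
        (\<integral>\<^sup>+g. ennreal (fG g) * indicator B (S g) \<partial>M) = (\<integral>\<^sup>+a. ennreal (r a) * indicator B a \<partial>N)"
  shows "integrable N (\<lambda>a. r a * H a)" and "(\<integral>g. fG g * H (S g) \<partial>M) = (\<integral>a. r a * H a \<partial>N)"
proof -
  have "(\<lambda>g. fG g * H (S g)) \<in> borel_measurable M"
    using intM by (rule borel_measurable_integrable)
  then have "(\<integral>\<^sup>+g. ennreal (fG g * H (S g)) \<partial>M) = (\<integral>\<^sup>+a. ennreal (r a) * ennreal (H a) \<partial>N)"
    using hyp by (intro nn_integral_transfer_levels[where Sym = Sym, OF sfM sfN fG fG0 S H H0 _ _ symH])
                 simp_all
  also have "\<dots> = (\<integral>\<^sup>+a. ennreal (r a * H a) \<partial>N)"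
    using r0 H0 by (intro nn_integral_cong) (simp add: ennreal_mult)
  finally have "(\<integral>\<^sup>+g. ennreal (fG g * H (S g)) \<partial>M) = (\<integral>\<^sup>+a. ennreal (r a * H a) \<partial>N)" .
  moreover have "(\<integral>\<^sup>+g. ennreal (fG g * H (S g)) \<partial>M) = ennreal (\<integral>g. fG g * H (S g) \<partial>M)"
    using fG0 H0 S by (intro nn_integral_eq_integral[OF intM] AE_I2) simp
  ultimately have eq: "(\<integral>\<^sup>+a. ennreal (r a * H a) \<partial>N) = ennreal (\<integral>g. fG g * H (S g) \<partial>M)"
    by simp
  have nonneg: "AE a in N. 0 \<le> r a * H a" using r0 H0 by (intro AE_I2) simp
  show int: "integrable N (\<lambda>a. r a * H a)"
    using eq nonneg by (intro integrableI_nonneg) auto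
  have "ennreal (\<integral>a. r a * H a \<partial>N) = ennreal (\<integral>g. fG g * H (S g) \<partial>M)"
    using nn_integral_eq_integral[OF int nonneg] eq by simp
  moreover have "0 \<le> (\<integral>a. r a * H a \<partial>N)" "0 \<le> (\<integral>g. fG g * H (S g) \<partial>M)"
    using r0 H0 fG0 S by (simp_all add: integral_nonneg)
  ultimately show "(\<integral>g. fG g * H (S g) \<partial>M) = (\<integral>a. r a * H a \<partial>N)"
    by simp
qed

lemma integral_transfer_levels_real:
  fixes M :: "'a measure" and N :: "'b measure" and fG :: "'a \<Rightarrow> real" and S :: "'a \<Rightarrow> 'b"
    and H :: "'b \<Rightarrow> real" and r :: "'b \<Rightarrow> real" and Sym :: "'b set \<Rightarrow> bool"
  assumes sfM: "sigma_finite_measure M" and sfN: "sigma_finite_measure N"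
    and fG[measurable]: "fG \<in> borel_measurable M" and fG0: "\<And>g. g \<in> space M \<Longrightarrow> 0 \<le> fG g"
    and S: "\<And>g. g \<in> space M \<Longrightarrow> S g \<in> space N"
    and H[measurable]: "H \<in> borel_measurable N"
    and intM: "integrable M (\<lambda>g. fG g * H (S g))"
    and r[measurable]: "r \<in> borel_measurable N" and r0: "\<And>a. a \<in> space N \<Longrightarrow> 0 \<le> r a"
    and symH: "\<And>P. Sym {a \<in> space N. P (H a)}"
    and hyp: "\<And>B. B \<in> sets N \<Longrightarrow> Sym B \<Longrightarrow>
        (\<integral>\<^sup>+g. ennreal (fG g) * indicator B (S g) \<partial>M) = (\<integral>\<^sup>+a. ennreal (r a) * indicator B a \<partial>N)"
  shows "integrable N (\<lambda>a. r a * H a)" and "(\<integral>g. fG g * H (S g) \<partial>M) = (\<integral>a. r a * H a \<partial>N)"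
proof -
  have pos: "integrable N (\<lambda>a. r a * max (H a) 0)"
      "(\<integral>g. fG g * max (H (S g)) 0 \<partial>M) = (\<integral>a. r a * max (H a) 0 \<partial>N)"
    and neg: "integrable N (\<lambda>a. r a * max (- H a) 0)"
      "(\<integral>g. fG g * max (- H (S g)) 0 \<partial>M) = (\<integral>a. r a * max (- H a) 0 \<partial>N)"
    and intM': "integrable M (\<lambda>g. fG g * max (H (S g)) 0)" "integrable M (\<lambda>g. fG g * max (- H (S g)) 0)"
  proof -
    have "fG g * max (H (S g)) 0 = max (fG g * H (S g)) 0"
      and "fG g * max (- H (S g)) 0 = max (- (fG g * H (S g))) 0" if "g \<in> space M" for g
      using fG0[OF that] by (auto simp: max_def mult_le_0_iff zero_le_mult_iff)
    then show "integrable M (\<lambda>g. fG g * max (H (S g)) 0)" "integrable M (\<lambda>g. fG g * max (- H (S g)) 0)"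
      using intM by (auto cong: Bochner_Integration.integrable_cong)
    then show "integrable N (\<lambda>a. r a * max (H a) 0)"
      "(\<integral>g. fG g * max (H (S g)) 0 \<partial>M) = (\<integral>a. r a * max (H a) 0 \<partial>N)"
      "integrable N (\<lambda>a. r a * max (- H a) 0)"
      "(\<integral>g. fG g * max (- H (S g)) 0 \<partial>M) = (\<integral>a. r a * max (- H a) 0 \<partial>N)"
      using integral_transfer_levels_nonneg[where S = S and H = "\<lambda>a. max (H a) 0" and Sym = Sym,
              OF sfM sfN fG fG0 S _ _ _ r r0 symH[of "\<lambda>x. _ < max x 0"] hyp]
            integral_transfer_levels_nonneg[where S = S and H = "\<lambda>a. max (- H a) 0" and Sym = Sym,
              OF sfM sfN fG fG0 S _ _ _ r r0 symH[of "\<lambda>x. _ < max (- x) 0"] hyp]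
      by auto
  qed
  have split: "x * y = x * max y 0 - x * max (- y) 0" for x y :: real
    by (simp add: max_def algebra_simps)
  show "integrable N (\<lambda>a. r a * H a)"
    using pos neg by (subst split) auto
  show "(\<integral>g. fG g * H (S g) \<partial>M) = (\<integral>a. r a * H a \<partial>N)"
    using pos neg intM' by (subst (1 2) split) (simp add: Bochner_Integration.integral_diff)
qed

lemma integral_transfer_levels_complex:
  fixes M :: "'a measure" and N :: "'b measure" and fG :: "'a \<Rightarrow> real" and S :: "'a \<Rightarrow> 'b"
    and H :: "'b \<Rightarrow> complex" and r :: "'b \<Rightarrow> real" and Sym :: "'b set \<Rightarrow> bool"
  assumes sfM: "sigma_finite_measure M" and sfN: "sigma_finite_measure N"
    and fG[measurable]: "fG \<in> borel_measurable M" and fG0: "\<And>g. g \<in> space M \<Longrightarrow> 0 \<le> fG g"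
    and S: "\<And>g. g \<in> space M \<Longrightarrow> S g \<in> space N"
    and H[measurable]: "H \<in> borel_measurable N"
    and intM: "integrable M (\<lambda>g. of_real (fG g) * H (S g))"
    and r[measurable]: "r \<in> borel_measurable N" and r0: "\<And>a. a \<in> space N \<Longrightarrow> 0 \<le> r a"
    and symH: "\<And>P. Sym {a \<in> space N. P (H a)}"
    and hyp: "\<And>B. B \<in> sets N \<Longrightarrow> Sym B \<Longrightarrow>
        (\<integral>\<^sup>+g. ennreal (fG g) * indicator B (S g) \<partial>M) = (\<integral>\<^sup>+a. ennreal (r a) * indicator B a \<partial>N)"
  shows "(\<integral>g. of_real (fG g) * H (S g) \<partial>M) = (\<integral>a. of_real (r a) * H a \<partial>N)"
proof -
  have Re: "integrable N (\<lambda>a. r a * Re (H a))"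
      "(\<integral>g. fG g * Re (H (S g)) \<partial>M) = (\<integral>a. r a * Re (H a) \<partial>N)"
    using integral_transfer_levels_real[where S = S and H = "\<lambda>a. Re (H a)" and Sym = Sym,
            OF sfM sfN fG fG0 S _ _ r r0 symH[of "\<lambda>z. _ (Re z)"] hyp] integrable_Re[OF intM] by auto
  have Im: "integrable N (\<lambda>a. r a * Im (H a))"
      "(\<integral>g. fG g * Im (H (S g)) \<partial>M) = (\<integral>a. r a * Im (H a) \<partial>N)"
    using integral_transfer_levels_real[where S = S and H = "\<lambda>a. Im (H a)" and Sym = Sym,
            OF sfM sfN fG fG0 S _ _ r r0 symH[of "\<lambda>z. _ (Im z)"] hyp] integrable_Im[OF intM] by auto
  have "of_real (r a) * H a = of_real (r a * Re (H a)) + \<i> * of_real (r a * Im (H a))" for a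
    by (simp add: complex_eq_iff)
  hence intN: "integrable N (\<lambda>a. of_real (r a) * H a)"
    using Re Im by (simp only:) (intro Bochner_Integration.integrable_add integrable_mult_right integrable_of_real)
  show ?thesis
    using Re Im by (simp add: complex_eq_iff integral_Re[OF intM, symmetric] integral_Im[OF intM, symmetric]
                              integral_Re[OF intN, symmetric] integral_Im[OF intN, symmetric])
qed

section \<open>The spherical function in terms of squared singular values\<close>

lemma measurable_cpowr_of_real[measurable]:
  "(\<lambda>x::real. complex_of_real x powr c) \<in> borel_measurable borel"
proof -
  have "complex_of_real x powr c =
          (if x = 0 then 0 else exp (c * (of_real (ln \<bar>x\<bar>) + (if x < 0 then pi else 0) * \<i>)))" for x
    by (cases "x = 0") (simp_all add: powr_def Ln_of_real')
  then show ?thesis by simp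
qed

text \<open>\<open>\<phi>\<^sub>s(g) / |det g|\<^sup>2\<^sup>n\<close> as a function of the squared singular values \<open>a\<close> of \<open>g\<close>,
  using \<open>|det g|\<^sup>2 = \<Prod>a\<close>.\<close>

definition spherical_kernel :: "nat \<Rightarrow> (nat \<Rightarrow> complex) \<Rightarrow> (nat \<Rightarrow> real) \<Rightarrow> complex" where
  "spherical_kernel n s a = vandermonde n (rho' n) / vandermonde n s *
     (det (mat n n (\<lambda>(j,k). complex_of_real (a j) powr (s k + (of_nat n - 1) / 2)))
       / complex_of_real (vandermonde n a)) / complex_of_real ((\<Prod>i<n. a i) ^ n)"

lemma spherical_integrand_eq_spherical_kernel:
  "spherical_integrand n fG s g = complex_of_real (fG g) * spherical_kernel n s (sq_sv n g)"
  unfolding spherical_integrand_def spherical_fun_def spherical_kernel_def Let_def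
  by (simp add: prod_sq_sv_eq_cmod_det power_mult)

lemma spherical_kernel_measurable[measurable]: "spherical_kernel n s \<in> borel_measurable (lebesgue_vec n)"
  unfolding spherical_kernel_def[abs_def] vandermonde_def by measurable

lemma spherical_kernel_permute:
  assumes p: "p permutes {..<n}"
  shows "spherical_kernel n s (restrict (a \<circ> p) {..<n}) = spherical_kernel n s a"
proof -
  have p_lt: "i < n \<Longrightarrow> p i < n" for i using permutes_in_image[OF p, of i] by simp
  define A where "A = mat n n (\<lambda>(j,k). complex_of_real (a j) powr (s k + (of_nat n - 1) / 2))"
  have "mat n n (\<lambda>(j,k). complex_of_real (restrict (a \<circ> p) {..<n} j) powr (s k + (of_nat n - 1) / 2))
        = mat n n (\<lambda>(j,k). A $$ (p j, k))"
    by (intro eq_matI) (auto simp: A_def p_lt)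
  hence det: "det (mat n n (\<lambda>(j,k). complex_of_real (restrict (a \<circ> p) {..<n} j) powr (s k + (of_nat n - 1) / 2)))
      = of_int (sign p) * det A"
    using det_permute_rows[of A n p] p by (simp add: A_def atLeast0LessThan)
  have "vandermonde n (restrict (a \<circ> p) {..<n}) = vandermonde n (\<lambda>i. a (p i))"
    by (rule vandermonde_cong) auto
  hence vdm: "vandermonde n (restrict (a \<circ> p) {..<n}) = of_int (sign p) * vandermonde n a"
    using vandermonde_permute[OF p] by simp
  have prod: "(\<Prod>i<n. restrict (a \<circ> p) {..<n} i) = (\<Prod>i<n. a i)"
    using prod.permute[OF p, of a] by (simp add: o_def)
  show ?thesis
    unfolding spherical_kernel_def det vdm prod A_def[symmetric] by (simp add: sign_def)
qed

lemma perm_symmetric_level_set_spherical_kernel: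
  "perm_symmetric_set n {a \<in> space (lebesgue_vec n). P (spherical_kernel n s a)}"
  using spherical_kernel_permute by (auto simp: perm_symmetric_set_def space_lebesgue_vec)

section \<open>The joint density of the squared singular values\<close>

interpretation lborel_product_complex: product_sigma_finite "\<lambda>_::nat\<times>nat. (lborel :: complex measure)"
  by unfold_locales

lemma sigma_finite_lebesgue_mat: "sigma_finite_measure (lebesgue_mat n)"
  unfolding lebesgue_mat_def by (rule lborel_product_complex.sigma_finite) (simp add: Mat_idx_def)

lemma sq_sv_in_space: "sq_sv n g \<in> space (lebesgue_vec n)"
  by (simp add: space_lebesgue_vec sq_sv_def)

lemma L1k0_moment:
  assumes "L1k0 {1..real n} f" and "j < n"
  shows "set_integrable lborel {0<..} (\<lambda>x. x ^ j * f x)"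
proof -
  have "real (Suc j) \<in> {1..real n}" using assms(2) by auto
  then have "set_integrable lborel {0<..} (\<lambda>x. x powr (real (Suc j) - 1) * f x)"
    using assms(1) unfolding L1k0_def by blast
  then show ?thesis
    by (rule set_integrable_cong[THEN iffD1, rotated -1]) (auto simp: powr_realpow)
qed

lemma integral_f_SV_pos_orthant:
  assumes L: "\<forall>j<n. L1k0 {1..real n} (w j)"
  shows "integrable (lebesgue_vec n) (\<lambda>a. f_SV n w a * indicator (pos_orthant n) a)"
    and "(\<integral>a. f_SV n w a * indicator (pos_orthant n) a \<partial>lebesgue_vec n) =
      C_sv n w * fact n * det (mat n n (\<lambda>(j,k). set_lebesgue_integral lborel {0<..} (\<lambda>a. a ^ k * w j a)))"
proof -
  define u where "u j x = complex_of_real (x ^ j)" for j x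
  define v where "v j x = complex_of_real (w j x)" for j x
  define F where "F a = indicator (pos_orthant n) a *\<^sub>R
                          (det (mat n n (\<lambda>(i,j). u j (a i))) * det (mat n n (\<lambda>(i,j). v j (a i))))" for a
  have int: "set_integrable lborel {0<..} (\<lambda>x. u j x * v k x)" if "j < n" "k < n" for j k
  proof -
    have "integrable lborel (\<lambda>x. complex_of_real (indicator {0<..} x *\<^sub>R (x ^ j * w k x)))"
      using L1k0_moment[of n "w k" j] L that unfolding set_integrable_def by (intro integrable_of_real) auto
    then show ?thesis unfolding set_integrable_def u_def v_def by (simp add: scaleR_conv_of_real)
  qed
  have FE: "complex_of_real (f_SV n w a * indicator (pos_orthant n) a) = complex_of_real (C_sv n w) * F a" for a
  proof -
    have "complex_of_real (vandermonde n a) = det (mat n n (\<lambda>(i,j). u j (a i)))"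
      unfolding vandermonde_eq_det u_def by (rule of_real_det_mat)
    moreover have "complex_of_real (det (mat n n (\<lambda>(j,k). w j (a k)))) = det (mat n n (\<lambda>(i,j). v j (a i)))"
      unfolding v_def det_mat_swap_indices[of n "\<lambda>i j. w j (a i)"] by (rule of_real_det_mat)
    ultimately show ?thesis unfolding f_SV_def F_def by (simp add: scaleR_conv_of_real mult_ac)
  qed
  have D: "det (mat n n (\<lambda>(j,k). set_lebesgue_integral lborel {0<..} (\<lambda>x. u j x * v k x))) =
     complex_of_real (det (mat n n (\<lambda>(j,k). set_lebesgue_integral lborel {0<..} (\<lambda>a. a ^ k * w j a))))"
    unfolding u_def v_def of_real_det_mat set_integral_complex_of_real[symmetric] of_real_mult[symmetric]
    by (rule det_mat_swap_indices)
  have "integrable (lebesgue_vec n) (\<lambda>a. complex_of_real (f_SV n w a * indicator (pos_orthant n) a))"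
    unfolding FE using andreief_identity(1)[where n = n and u = u and v = v, OF int]
    by (intro integrable_mult_right) (simp add: F_def)
  then show "integrable (lebesgue_vec n) (\<lambda>a. f_SV n w a * indicator (pos_orthant n) a)"
    using integrable_Re by fastforce
  have "complex_of_real (\<integral>a. f_SV n w a * indicator (pos_orthant n) a \<partial>lebesgue_vec n) =
        complex_of_real (C_sv n w) * integral\<^sup>L (lebesgue_vec n) F"
    unfolding integral_complex_of_real[symmetric] FE by simp
  also have "\<dots> = complex_of_real (C_sv n w * fact n *
                     det (mat n n (\<lambda>(j,k). set_lebesgue_integral lborel {0<..} (\<lambda>a. a ^ k * w j a))))"
    using andreief_identity(2)[where n = n and u = u and v = v, OF int] D by (simp add: F_def[abs_def])
  finally show "(\<integral>a. f_SV n w a * indicator (pos_orthant n) a \<partial>lebesgue_vec n) =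
      C_sv n w * fact n * det (mat n n (\<lambda>(j,k). set_lebesgue_integral lborel {0<..} (\<lambda>a. a ^ k * w j a)))"
    by (simp only: of_real_eq_iff)
qed

lemma polynomial_ensemble_sq_sv_distribution:
  assumes "polynomial_ensemble n w fG" and "B \<in> sets (lebesgue_vec n)" and "perm_symmetric_set n B"
  shows "(\<integral>\<^sup>+g. ennreal (fG g) * indicator B (sq_sv n g) \<partial>lebesgue_mat n) =
         (\<integral>\<^sup>+a. ennreal (max 0 (f_SV n w a * indicator (pos_orthant n) a)) * indicator B a \<partial>lebesgue_vec n)"
  using assms unfolding polynomial_ensemble_def
  by (auto simp: indicator_def max_def ennreal_neg intro!: nn_integral_cong)

text \<open>Only \<open>ennreal \<circ> f\<^sub>S\<^sub>V\<close> enters the definition of the ensemble, and \<open>ennreal\<close> cuts off negative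
  values. That \<open>f\<^sub>S\<^sub>V\<close> is nonnegative anyway (a.e.\ on the orthant) follows from its
  normalization by \<open>C\<^sub>s\<^sub>v\<close>: its integral is \<open>1\<close>, which is also the integral of its positive
  part.\<close>

lemma polynomial_ensemble_f_SV_nonneg:
  assumes L: "\<forall>j<n. L1k0 {1..real n} (w j)" and ens: "polynomial_ensemble n w fG"
  shows "AE a in lebesgue_vec n. 0 \<le> f_SV n w a * indicator (pos_orthant n) a"
proof -
  define f where "f a = f_SV n w a * indicator (pos_orthant n) a" for a
  define D where "D = det (mat n n (\<lambda>(j,k). set_lebesgue_integral lborel {0<..} (\<lambda>a. a ^ k * w j a)))"
  have int_f: "integrable (lebesgue_vec n) f" and integral_f: "integral\<^sup>L (lebesgue_vec n) f = C_sv n w * fact n * D"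
    unfolding f_def D_def using integral_f_SV_pos_orthant[OF L] by auto
  have [measurable]: "f \<in> borel_measurable (lebesgue_vec n)"
    using int_f by (rule borel_measurable_integrable)
  have "perm_symmetric_set n (space (lebesgue_vec n))"
    by (simp add: perm_symmetric_set_def space_lebesgue_vec)
  from polynomial_ensemble_sq_sv_distribution[OF ens sets.top this]
  have pos_part: "(\<integral>\<^sup>+a. ennreal (max 0 (f a)) \<partial>lebesgue_vec n) = 1"
    using ens by (simp add: polynomial_ensemble_def sq_sv_in_space f_def cong: nn_integral_cong)
  have "D \<noteq> 0"
  proof
    assume "D = 0"
    hence "f a = 0" for a by (simp add: f_def f_SV_def C_sv_def D_def[symmetric])
    with pos_part show False by simp
  qed
  then have "integral\<^sup>L (lebesgue_vec n) f = 1"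
    unfolding integral_f C_sv_def D_def[symmetric] by simp
  moreover have "integral\<^sup>L (lebesgue_vec n) (\<lambda>a. max 0 (f a)) = 1"
    using pos_part by (subst integral_eq_nn_integral) auto
  moreover have "integrable (lebesgue_vec n) (\<lambda>a. max 0 (f a))"
    using pos_part by (intro integrableI_nonneg) auto
  ultimately have "AE a in lebesgue_vec n. max 0 (f a) - f a = 0"
    using int_f by (subst integral_nonneg_eq_0_iff_AE[symmetric]) (auto simp: Bochner_Integration.integral_diff)
  then show ?thesis
    by eventually_elim (simp add: f_def max_def split: if_splits)
qed

lemma polynomial_ensemble_integral_sq_sv:
  fixes H :: "(nat \<Rightarrow> real) \<Rightarrow> complex"
  assumes L: "\<forall>j<n. L1k0 {1..real n} (w j)" and ens: "polynomial_ensemble n w fG"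
    and H[measurable]: "H \<in> borel_measurable (lebesgue_vec n)"
    and symH: "\<And>P. perm_symmetric_set n {a \<in> space (lebesgue_vec n). P (H a)}"
    and int: "integrable (lebesgue_mat n) (\<lambda>g. complex_of_real (fG g) * H (sq_sv n g))"
  shows "(\<integral>g. complex_of_real (fG g) * H (sq_sv n g) \<partial>lebesgue_mat n) =
         (\<integral>a. complex_of_real (f_SV n w a * indicator (pos_orthant n) a) * H a \<partial>lebesgue_vec n)"
proof -
  define f where "f a = f_SV n w a * indicator (pos_orthant n) a" for a
  have [measurable]: "f \<in> borel_measurable (lebesgue_vec n)"
    unfolding f_def using integral_f_SV_pos_orthant(1)[OF L] by (rule borel_measurable_integrable)
  have "(\<integral>g. complex_of_real (fG g) * H (sq_sv n g) \<partial>lebesgue_mat n) =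
        (\<integral>a. complex_of_real (max 0 (f a)) * H a \<partial>lebesgue_vec n)"
  proof (rule integral_transfer_levels_complex[OF sigma_finite_lebesgue_mat sigma_finite_lebesgue_vec
            _ _ sq_sv_in_space H int _ _ symH])
    show "(\<integral>\<^sup>+g. ennreal (fG g) * indicator B (sq_sv n g) \<partial>lebesgue_mat n) =
          (\<integral>\<^sup>+a. ennreal (max 0 (f a)) * indicator B a \<partial>lebesgue_vec n)"
      if "B \<in> sets (lebesgue_vec n)" "perm_symmetric_set n B" for B
      using polynomial_ensemble_sq_sv_distribution[OF ens that] by (simp add: f_def)
  qed (use ens in \<open>auto simp: polynomial_ensemble_def\<close>)
  also have "\<dots> = (\<integral>a. complex_of_real (f a) * H a \<partial>lebesgue_vec n)"
  proof (rule integral_cong_AE)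
    show "AE a in lebesgue_vec n. complex_of_real (max 0 (f a)) * H a = complex_of_real (f a) * H a"
      using polynomial_ensemble_f_SV_nonneg[OF L ens] by eventually_elim (simp add: f_def)
  qed measurable
  finally show ?thesis unfolding f_def .
qed

text \<open>On the orthant the Vandermonde determinants of \<open>f\<^sub>S\<^sub>V\<close> and of the spherical function
  cancel (if \<open>\<Delta>\<^sub>n(a) = 0\<close> then also \<open>det[w\<^sub>j(a\<^sub>k)] = 0\<close>), and \<open>(\<Prod>a)\<^sup>-\<^sup>n\<close> lowers every exponent by \<open>n\<close>.\<close>

lemma f_SV_mult_spherical_kernel:
  "complex_of_real (f_SV n w a * indicator (pos_orthant n) a) * spherical_kernel n s a =
   complex_of_real (C_sv n w) * (vandermonde n (rho' n) / vandermonde n s) *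
   (indicator (pos_orthant n) a *\<^sub>R (det (mat n n (\<lambda>(i,j). complex_of_real (w j (a i)))) *
       det (mat n n (\<lambda>(i,j). complex_of_real (a i) powr (s j - (of_nat n - 1) / 2 - 1)))))"
proof (cases "a \<in> pos_orthant n")
  case True
  hence pos: "\<And>i. i < n \<Longrightarrow> 0 < a i" by (auto simp: pos_orthant_def)
  define c where "c k = s k + (of_nat n - 1) / 2" for k
  define V where "V = vandermonde n a"
  define W where "W = det (mat n n (\<lambda>(j,k). w j (a k)))"
  define P where "P = det (mat n n (\<lambda>(j,k). complex_of_real (a j) powr c k))"
  define Q where "Q = (\<Prod>i<n. a i) ^ n"
  have W: "complex_of_real W = det (mat n n (\<lambda>(i,j). complex_of_real (w j (a i))))"
    unfolding W_def det_mat_swap_indices[of n "\<lambda>i j. w j (a i)"] by (rule of_real_det_mat)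
  have "complex_of_real (a i) powr (s j - (of_nat n - 1) / 2 - 1) =
        (1 / complex_of_real (a i) ^ n) * complex_of_real (a i) powr c j" if "i < n" for i j
  proof -
    have "s j - (of_nat n - 1) / 2 - 1 = c j - of_nat n" by (simp add: c_def field_simps)
    thus ?thesis using pos[OF that] by (simp add: powr_diff powr_nat')
  qed
  hence "det (mat n n (\<lambda>(i,j). complex_of_real (a i) powr (s j - (of_nat n - 1) / 2 - 1)))
        = (\<Prod>i<n. 1 / complex_of_real (a i) ^ n) * P"
    unfolding P_def det_mat_scale_rows[symmetric] by (intro arg_cong[where f = det] eq_matI) auto
  also have "(\<Prod>i<n. 1 / complex_of_real (a i) ^ n) = 1 / complex_of_real Q"
    unfolding Q_def by (simp add: prod_dividef prod_power_distrib of_real_prod)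
  finally have PQ: "P / complex_of_real Q =
      det (mat n n (\<lambda>(i,j). complex_of_real (a i) powr (s j - (of_nat n - 1) / 2 - 1)))" by simp
  have VW: "complex_of_real V * complex_of_real W * (P / complex_of_real V) = complex_of_real W * P"
  proof (cases "V = 0")
    case True
    then obtain j k where "j < k" "k < n" "a j = a k"
      using vandermonde_eq_0_imp_eq unfolding V_def by blast
    hence "W = 0"
      unfolding W_def by (intro det_identical_columns[of _ n j k]) (auto intro!: eq_vecI)
    then show ?thesis by simp
  qed simp
  have "complex_of_real (f_SV n w a * indicator (pos_orthant n) a) * spherical_kernel n s a
     = complex_of_real (C_sv n w) * (vandermonde n (rho' n) / vandermonde n s) *
       (complex_of_real V * complex_of_real W * (P / complex_of_real V)) / complex_of_real Q"
    using True unfolding spherical_kernel_def f_SV_def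
    by (simp add: V_def W_def P_def Q_def c_def mult_ac)
  also have "\<dots> = complex_of_real (C_sv n w) * (vandermonde n (rho' n) / vandermonde n s) *
                     (complex_of_real W * (P / complex_of_real Q))"
    unfolding VW by simp
  finally show ?thesis
    using True unfolding W PQ by simp
qed simp

theorem proposition3p1:
  fixes n :: nat and w :: "nat \<Rightarrow> real \<Rightarrow> real"
    and fG :: "(nat \<times> nat \<Rightarrow> complex) \<Rightarrow> real" and s :: "nat \<Rightarrow> complex"
  assumes "\<forall>j<n. L1k0 {1..real n} (w j)"
    and "polynomial_ensemble n w fG"
    and "\<forall>j<n. \<forall>k<n. j \<noteq> k \<longrightarrow> s j \<noteq> s k"
    and "integrable (lebesgue_mat n) (spherical_integrand n fG s)"
    and "\<forall>j<n. \<forall>k<n. mellin_defined (w j) (s k - (of_nat n - 1) / 2)"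
  shows "spherical_transform n fG s =
    complex_of_real (C_sv n w) * of_nat (\<Prod>j\<le>n. fact j) *
    Determinant.det (mat n n (\<lambda>(j,k). mellin (w j) (s k - (of_nat n - 1) / 2))) / vandermonde n s"
proof -
  define u where "u j x = complex_of_real (w j x)" for j x
  define v where "v k x = complex_of_real x powr (s k - (of_nat n - 1) / 2 - 1)" for k x
  have mellin_uv: "mellin (w j) (s k - (of_nat n - 1) / 2) = set_lebesgue_integral lborel {0<..} (\<lambda>x. u j x * v k x)"
    and int_uv: "j < n \<Longrightarrow> k < n \<Longrightarrow> set_integrable lborel {0<..} (\<lambda>x. u j x * v k x)" for j k
    using assms(5) by (simp_all add: u_def v_def mellin_def mellin_defined_def)
  have "spherical_transform n fG s =
        (\<integral>a. complex_of_real (f_SV n w a * indicator (pos_orthant n) a) * spherical_kernel n s a \<partial>lebesgue_vec n)"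
    using polynomial_ensemble_integral_sq_sv[OF assms(1,2) spherical_kernel_measurable
        perm_symmetric_level_set_spherical_kernel] assms(4)
    by (simp add: spherical_transform_def spherical_integrand_eq_spherical_kernel[abs_def])
  also have "\<dots> = complex_of_real (C_sv n w) * (vandermonde n (rho' n) / vandermonde n s) *
      (\<integral>a. indicator (pos_orthant n) a *\<^sub>R (det (mat n n (\<lambda>(i,j). u j (a i))) * det (mat n n (\<lambda>(i,j). v j (a i)))) \<partial>lebesgue_vec n)"
    unfolding f_SV_mult_spherical_kernel u_def v_def by (rule integral_mult_right_zero)
  also have "\<dots> = complex_of_real (C_sv n w) * (vandermonde n (rho' n) / vandermonde n s) *
      (of_nat (fact n) * det (mat n n (\<lambda>(j,k). mellin (w j) (s k - (of_nat n - 1) / 2))))"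
    using andreief_identity(2)[where n = n and u = u and v = v, OF int_uv] by (simp add: mellin_uv)
  also have "\<dots> = complex_of_real (C_sv n w) * of_nat (\<Prod>j\<le>n. fact j) *
    Determinant.det (mat n n (\<lambda>(j,k). mellin (w j) (s k - (of_nat n - 1) / 2))) / vandermonde n s"
    by (simp add: vandermonde_rho' lessThan_Suc_atMost[symmetric] prod.lessThan_Suc del: of_nat_prod)
  finally show ?thesis .
qed

end
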